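(* Let $\Omega\subset\mathbb{C}^d$ be a complete Kobayashi hyperbolic domain. Then for every $o\in\Omega$, $x\in\partial\Omega$ and $R>0$, the set $H^b_o(x,R)$ is nonempty. Moreover, if $\Omega$ is bounded, then $\overline{H^b_o(x,R)}\cap\partial\Omega$ is nonempty.
   Context: For a Kobayashi hyperbolic domain $\Omega\subset\mathbb{C}^d$ with Kobayashi distance $\mathsf{k}_\Omega$, $x\in\partial\Omega$, $o\in\Omega$, $R>0$: $H^b_o(x,R)=\{z\in\Omega:\liminf_{w\to x}(\mathsf{k}_\Omega(z,w)-\mathsf{k}_\Omega(o,w))<\tfrac12\log R\}$; closure in $\mathbb{C}^d$. Complete Kobayashi hyperbolic means $(\Omega,\mathsf{k}_\Omega)$ is Cauchy complete. *)

theory Defs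
  imports "HOL-Analysis.Analysis"
begin

text \<open>Poincare distance on the unit disc (curvature -4 convention).\<close>
definition poincare_dist :: "complex \<Rightarrow> complex \<Rightarrow> real" where
  "poincare_dist a b = artanh (cmod ((a - b) / (1 - cnj a * b)))"

definition holo_disc :: "(complex^'n) set \<Rightarrow> (complex \<Rightarrow> complex^'n) \<Rightarrow> bool" where
  "holo_disc \<Omega> f \<longleftrightarrow> (\<forall>i. (\<lambda>z. f z $ i) holomorphic_on ball 0 1) \<and> f ` ball 0 1 \<subseteq> \<Omega>"

definition kob_chain ::
  "(complex^'n) set \<Rightarrow> complex^'n \<Rightarrow> complex^'n \<Rightarrow> ((complex \<Rightarrow> complex^'n) \<times> complex \<times> complex) list \<Rightarrow> bool" where
  "kob_chain \<Omega> z w cs \<longleftrightarrow> cs \<noteq> [] \<and>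
     (\<forall>(f, a, b) \<in> set cs. holo_disc \<Omega> f \<and> a \<in> ball 0 1 \<and> b \<in> ball 0 1) \<and>
     (case hd cs of (f, a, b) \<Rightarrow> f a = z) \<and>
     (case last cs of (f, a, b) \<Rightarrow> f b = w) \<and>
     (\<forall>i. Suc i < length cs \<longrightarrow>
        (case cs ! i of (f, a, b) \<Rightarrow> f b) = (case cs ! Suc i of (g, c, d) \<Rightarrow> g c))"

definition kobayashi :: "(complex^'n) set \<Rightarrow> complex^'n \<Rightarrow> complex^'n \<Rightarrow> real" where
  "kobayashi \<Omega> z w = Inf {(\<Sum>(f, a, b) \<leftarrow> cs. poincare_dist a b) | cs. kob_chain \<Omega> z w cs}"

definition kobayashi_hyperbolic :: "(complex^'n) set \<Rightarrow> bool" where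
  "kobayashi_hyperbolic \<Omega> \<longleftrightarrow> (\<forall>z\<in>\<Omega>. \<forall>w\<in>\<Omega>. z \<noteq> w \<longrightarrow> kobayashi \<Omega> z w > 0)"

definition kobayashi_complete :: "(complex^'n) set \<Rightarrow> bool" where
  "kobayashi_complete \<Omega> \<longleftrightarrow>
     (\<forall>s::nat \<Rightarrow> complex^'n. (\<forall>n. s n \<in> \<Omega>) \<and>
        (\<forall>e>0. \<exists>N. \<forall>m\<ge>N. \<forall>n\<ge>N. kobayashi \<Omega> (s m) (s n) < e) \<longrightarrow>
        (\<exists>l\<in>\<Omega>. (\<lambda>n. kobayashi \<Omega> (s n) l) \<longlonglongrightarrow> 0))"

definition horoball_b :: "(complex^'n) set \<Rightarrow> complex^'n \<Rightarrow> complex^'n \<Rightarrow> real \<Rightarrow> (complex^'n) set" where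
  "horoball_b \<Omega> p x R = {z \<in> \<Omega>.
     Liminf (at x within \<Omega>) (\<lambda>w. ereal (kobayashi \<Omega> z w - kobayashi \<Omega> p w)) < ereal (ln R / 2)}"

end

theory Submission
  imports Defs "HOL-Complex_Analysis.Riemann_Mapping"
begin

text \<open>The Kobayashi distance \<open>k\<close> is the infimum of lengths of chains of holomorphic
  discs; splitting a disc along a Poincare geodesic shows that it is a length metric, and
  hyperbolicity makes it induce the Euclidean topology. Completeness then yields, by the
  Hopf--Rinow argument, that closed Kobayashi balls are compact.

  Let \<open>w\<^sub>n \<rightarrow> x \<in> \<partial>\<Omega>\<close>. Compactness of balls forces \<open>k(p, w\<^sub>n) \<rightarrow> \<infinity>\<close>. Splitting nearly
  minimal chains from \<open>p\<close> to \<open>w\<^sub>n\<close> at distance \<open>T\<close> gives points \<open>y\<^sub>n\<close> in the ball of radius \<open>T\<close>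
  with \<open>k(y\<^sub>n, w\<^sub>n) \<approx> k(p, w\<^sub>n) - T\<close>; a limit point \<open>z\<close> of the \<open>y\<^sub>n\<close> then has
  \<open>liminf (k(z, w) - k(p, w)) \<le> 2 - T\<close>, so the horoball contains \<open>z\<close> once \<open>T\<close> is large.
  For bounded \<open>\<Omega>\<close>, horoball points \<open>z\<^sub>m\<close> with \<open>liminf < -m\<close> satisfy \<open>k(p, z\<^sub>m) > m - const\<close>
  by the triangle inequality, so their Euclidean accumulation points lie on \<open>\<partial>\<Omega>\<close>.\<close>

section \<open>The Poincare distance on the unit disc\<close>

lemma artanh_real_nonneg: "0 \<le> x \<Longrightarrow> x < 1 \<Longrightarrow> 0 \<le> artanh (x::real)"
  unfolding artanh_def by (simp add: divide_simps)

lemma artanh_real_diff: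
  fixes x y :: real
  assumes "\<bar>x\<bar> < 1" "\<bar>y\<bar> < 1"
  shows "artanh x - artanh y = artanh ((x - y) / (1 - x * y))"
proof -
  have xy: "\<bar>x * y\<bar> < 1"
    using assms mult_left_le_one_le[of "\<bar>y\<bar>" "\<bar>x\<bar>"] by (simp add: abs_mult)
  define z where "z = (x - y) / (1 - x * y)"
  have plus: "1 + z = (1 + x) * (1 - y) / (1 - x * y)"
    and minus: "1 - z = (1 - x) * (1 + y) / (1 - x * y)"
    using xy by (auto simp: z_def field_simps)
  have ratio: "(1 + z) / (1 - z) = ((1 + x) / (1 - x)) * ((1 - y) / (1 + y))"
    unfolding plus minus using assms xy by (simp add: divide_simps)
  have "ln ((1 + z) / (1 - z)) = ln ((1 + x) / (1 - x)) + ln ((1 - y) / (1 + y))"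
    unfolding ratio using assms by (intro ln_mult_pos) auto
  also have "ln ((1 - y) / (1 + y)) = - ln ((1 + y) / (1 - y))"
    using assms by (simp add: ln_div)
  finally show ?thesis
    unfolding z_def[symmetric] artanh_def by (simp add: diff_divide_distrib)
qed

lemma one_minus_cnj_mult_nonzero:
  fixes u v :: complex
  assumes "norm u < 1" "norm v < 1"
  shows "1 - cnj u * v \<noteq> 0"
proof
  assume "1 - cnj u * v = 0"
  then have "cnj u * v = 1" by simp
  then have "norm (cnj u * v) = 1" by simp
  moreover have "norm (cnj u * v) < 1"
    using assms mult_left_le_one_le[of "norm v" "norm u"] by (simp add: norm_mult)
  ultimately show False by simp
qed

lemma Moebius_function_pseudo_distance:
  fixes w u v :: complex
  assumes "norm w < 1" "norm u < 1" "norm v < 1"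
  defines "M \<equiv> Moebius_function 0 w"
  shows "(M u - M v) / (1 - cnj (M u) * M v)
           = (u - v) / (1 - cnj u * v) * ((1 - w * cnj u) / (1 - cnj w * u))"
proof -
  have nz: "1 - cnj w * u \<noteq> 0" "1 - cnj w * v \<noteq> 0" "1 - cnj u * w \<noteq> 0" "1 - cnj w * w \<noteq> 0"
    "1 - cnj u * v \<noteq> 0"
    using one_minus_cnj_mult_nonzero assms by blast+
  then have nz': "1 - w * cnj u \<noteq> 0" by (simp add: mult.commute)
  have "M u - M v = ((u - w) * (1 - cnj w * v) - (v - w) * (1 - cnj w * u))
                      / ((1 - cnj w * u) * (1 - cnj w * v))"
    using nz unfolding M_def Moebius_function_simple by (simp add: diff_frac_eq)
  also have "(u - w) * (1 - cnj w * v) - (v - w) * (1 - cnj w * u) = (u - v) * (1 - cnj w * w)"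
    by (simp add: algebra_simps)
  finally have num: "M u - M v = (u - v) * (1 - cnj w * w) / ((1 - cnj w * u) * (1 - cnj w * v))" .
  have "1 - cnj (M u) * M v
          = 1 - (cnj u - cnj w) * (v - w) / ((1 - w * cnj u) * (1 - cnj w * v))"
    unfolding M_def Moebius_function_simple by simp
  also have "\<dots> = ((1 - w * cnj u) * (1 - cnj w * v) - (cnj u - cnj w) * (v - w))
                    / ((1 - w * cnj u) * (1 - cnj w * v))"
    using nz nz' by (simp add: diff_divide_distrib)
  also have "(1 - w * cnj u) * (1 - cnj w * v) - (cnj u - cnj w) * (v - w)
               = (1 - cnj u * v) * (1 - cnj w * w)"
    by (simp add: algebra_simps)
  finally have den: "1 - cnj (M u) * M v
                       = (1 - cnj u * v) * (1 - cnj w * w) / ((1 - w * cnj u) * (1 - cnj w * v))" .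
  show ?thesis
    unfolding num den using nz nz' by (simp add: divide_simps)
qed

lemma poincare_dist_eq_Moebius: "poincare_dist a b = artanh (norm (Moebius_function 0 a b))"
  by (simp add: poincare_dist_def Moebius_function_simple norm_divide norm_minus_commute)

lemma poincare_dist_0_left: "poincare_dist 0 b = artanh (norm b)"
  by (simp add: poincare_dist_def)

lemma poincare_dist_self [simp]: "poincare_dist a a = 0"
  by (simp add: poincare_dist_def)

lemma poincare_dist_commute: "poincare_dist a b = poincare_dist b a"
proof -
  have "norm (1 - cnj a * b) = norm (cnj (1 - cnj a * b))"
    by (simp only: complex_mod_cnj)
  also have "cnj (1 - cnj a * b) = 1 - cnj b * a"
    by (simp add: mult.commute)
  finally show ?thesis
    unfolding poincare_dist_def by (simp add: norm_divide norm_minus_commute)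
qed

lemma poincare_dist_nonneg:
  assumes "a \<in> ball 0 1" "b \<in> ball 0 1"
  shows "0 \<le> poincare_dist a b"
  unfolding poincare_dist_eq_Moebius
  using assms by (intro artanh_real_nonneg Moebius_function_norm_lt_1) auto

lemma poincare_dist_Moebius_invariant:
  assumes "norm w < 1" "norm u < 1" "norm v < 1"
  shows "poincare_dist (Moebius_function 0 w u) (Moebius_function 0 w v) = poincare_dist u v"
proof -
  have "norm (1 - w * cnj u) = norm (1 - cnj w * u)"
    by (metis complex_cnj_cnj complex_cnj_diff complex_cnj_mult complex_cnj_one complex_mod_cnj)
  moreover have "1 - cnj w * u \<noteq> 0"
    using assms by (intro one_minus_cnj_mult_nonzero)
  ultimately have unit: "norm ((1 - w * cnj u) / (1 - cnj w * u)) = 1"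
    by (simp add: norm_divide)
  show ?thesis
    unfolding poincare_dist_def Moebius_function_pseudo_distance[OF assms] norm_mult unit
    by simp
qed

lemma poincare_dist_along_radius:
  assumes n\<beta>: "norm \<beta> < 1" and t: "t \<in> {0..1}"
  shows "poincare_dist (of_real t * \<beta>) \<beta> = artanh (norm \<beta>) - artanh (t * norm \<beta>)"
proof -
  have tb: "t * norm \<beta> \<le> norm \<beta>"
    using t mult_left_le_one_le[of "norm \<beta>" t] by simp
  have cnj_mult: "cnj (of_real t * \<beta>) * \<beta> = of_real (norm \<beta> * (t * norm \<beta>))"
  proof -
    have "cnj (of_real t * \<beta>) * \<beta> = of_real t * (\<beta> * cnj \<beta>)"
      by (simp add: mult_ac)
    also have "\<beta> * cnj \<beta> = of_real (norm \<beta> ^ 2)"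
      by (rule complex_norm_square[symmetric])
    finally show ?thesis by (simp add: power2_eq_square mult_ac)
  qed
  have "norm \<beta> * (t * norm \<beta>) < 1"
    using t n\<beta> tb mult_strict_mono'[of "norm \<beta>" 1 "t * norm \<beta>" 1] by simp
  moreover have "1 - cnj (of_real t * \<beta>) * \<beta> = of_real (1 - norm \<beta> * (t * norm \<beta>))"
    unfolding cnj_mult by simp
  ultimately have den: "norm (1 - cnj (of_real t * \<beta>) * \<beta>) = 1 - norm \<beta> * (t * norm \<beta>)"
    by (simp only: norm_of_real)
  have "of_real t * \<beta> - \<beta> = of_real (t - 1) * \<beta>"
    by (simp add: algebra_simps)
  then have num: "norm (of_real t * \<beta> - \<beta>) = norm \<beta> - t * norm \<beta>"
    using t by (simp only: norm_mult norm_of_real) (simp add: algebra_simps)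
  have "poincare_dist (of_real t * \<beta>) \<beta>
          = artanh ((norm \<beta> - t * norm \<beta>) / (1 - norm \<beta> * (t * norm \<beta>)))"
    unfolding poincare_dist_def norm_divide num den ..
  also have "\<dots> = artanh (norm \<beta>) - artanh (t * norm \<beta>)"
    using t n\<beta> tb by (simp add: artanh_real_diff)
  finally show ?thesis .
qed

text \<open>The Poincare segment from \<open>a\<close> to \<open>b\<close> is the Moebius image of the radius \<open>[0, \<beta>]\<close>,
  \<open>\<beta> = Moebius_function 0 a b\<close>, along which the Poincare distance is additive.\<close>
definition poincare_segment :: "complex \<Rightarrow> complex \<Rightarrow> real \<Rightarrow> complex" where
  "poincare_segment a b t = Moebius_function 0 (- a) (of_real t * Moebius_function 0 a b)"

context
  fixes a b :: complex
  assumes a: "a \<in> ball 0 1" and b: "b \<in> ball 0 1"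
begin

lemma norm_Moebius_function_lt_1: "norm (Moebius_function 0 a b) < 1"
  using a b by (intro Moebius_function_norm_lt_1) auto

lemma norm_scaled_Moebius_function_lt_1:
  "t \<in> {0..1} \<Longrightarrow> norm (of_real t * Moebius_function 0 a b) < 1"
  using norm_Moebius_function_lt_1 mult_left_le_one_le[of "norm (Moebius_function 0 a b)" t]
  by (simp add: norm_mult)

lemma poincare_segment_in_ball: "t \<in> {0..1} \<Longrightarrow> poincare_segment a b t \<in> ball 0 1"
  unfolding poincare_segment_def using a norm_scaled_Moebius_function_lt_1
  by (auto intro: Moebius_function_norm_lt_1)

lemma poincare_segment_0: "poincare_segment a b 0 = a"
  by (simp add: poincare_segment_def Moebius_function_of_zero)

lemma poincare_segment_1: "poincare_segment a b 1 = b"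
  unfolding poincare_segment_def using a b by (simp add: Moebius_function_compose)

lemma continuous_on_poincare_segment: "continuous_on {0..1} (poincare_segment a b)"
  unfolding poincare_segment_def
  by (rule continuous_on_compose2[OF holomorphic_on_imp_continuous_on[OF Moebius_function_holomorphic]])
    (use a norm_scaled_Moebius_function_lt_1 in \<open>auto intro!: continuous_intros\<close>)

lemma Moebius_function_poincare_segment:
  "t \<in> {0..1} \<Longrightarrow> Moebius_function 0 a (poincare_segment a b t) = of_real t * Moebius_function 0 a b"
  unfolding poincare_segment_def using a norm_scaled_Moebius_function_lt_1
  by (intro Moebius_function_compose) auto

lemma poincare_dist_poincare_segment_left:
  assumes t: "t \<in> {0..1}"
  shows "poincare_dist a (poincare_segment a b t) = artanh (t * norm (Moebius_function 0 a b))"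
proof -
  have "poincare_dist a (poincare_segment a b t)
          = poincare_dist (Moebius_function 0 a a) (of_real t * Moebius_function 0 a b)"
    using poincare_dist_Moebius_invariant poincare_segment_in_ball[OF t] a
      Moebius_function_poincare_segment[OF t] by fastforce
  then show ?thesis
    using t by (simp add: Moebius_function_eq_zero poincare_dist_0_left norm_mult)
qed

lemma poincare_dist_poincare_segment_add:
  assumes t: "t \<in> {0..1}"
  shows "poincare_dist a (poincare_segment a b t) + poincare_dist (poincare_segment a b t) b
           = poincare_dist a b"
proof -
  have "poincare_dist (poincare_segment a b t) b
          = poincare_dist (of_real t * Moebius_function 0 a b) (Moebius_function 0 a b)"
    using poincare_dist_Moebius_invariant poincare_segment_in_ball[OF t] a b
      Moebius_function_poincare_segment[OF t] by fastforce
  then show ?thesis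
    using poincare_dist_along_radius[OF norm_Moebius_function_lt_1 t]
      poincare_dist_poincare_segment_left[OF t] by (simp add: poincare_dist_eq_Moebius)
qed

lemma continuous_on_poincare_dist_poincare_segment:
  "continuous_on {0..1} (\<lambda>t. poincare_dist a (poincare_segment a b t))"
proof (rule continuous_on_eq)
  show "continuous_on {0..1} (\<lambda>t. artanh (t * norm (Moebius_function 0 a b)))"
    using norm_scaled_Moebius_function_lt_1 by (intro continuous_on_artanh' continuous_intros)
      (auto simp: norm_mult intro: less_le_trans[of "-1::real" 0])
qed (simp add: poincare_dist_poincare_segment_left)

lemma poincare_geodesic:
  obtains \<gamma> :: "real \<Rightarrow> complex"
  where "continuous_on {0..1} \<gamma>" "\<gamma> ` {0..1} \<subseteq> ball 0 1" "\<gamma> 0 = a" "\<gamma> 1 = b"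
    "continuous_on {0..1} (\<lambda>t. poincare_dist a (\<gamma> t))"
    "\<And>t. t \<in> {0..1} \<Longrightarrow> poincare_dist a (\<gamma> t) + poincare_dist (\<gamma> t) b = poincare_dist a b"
  by (rule that[of "poincare_segment a b"])
    (use poincare_segment_in_ball in \<open>auto simp: poincare_segment_0 poincare_segment_1
      continuous_on_poincare_segment continuous_on_poincare_dist_poincare_segment
      poincare_dist_poincare_segment_add\<close>)

end

section \<open>Chains of holomorphic discs\<close>

definition kob_chain_length :: "((complex \<Rightarrow> complex^'n) \<times> complex \<times> complex) list \<Rightarrow> real" where
  "kob_chain_length cs = (\<Sum>(f, a, b) \<leftarrow> cs. poincare_dist a b)"

lemma kob_chain_length_Nil [simp]: "kob_chain_length [] = 0"
  by (simp add: kob_chain_length_def)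

lemma kob_chain_length_Cons [simp]:
  "kob_chain_length ((f, a, b) # cs) = poincare_dist a b + kob_chain_length cs"
  by (simp add: kob_chain_length_def)

lemma kob_chain_length_append [simp]:
  "kob_chain_length (xs @ ys) = kob_chain_length xs + kob_chain_length ys"
  by (simp add: kob_chain_length_def)

lemma kobayashi_eq_Inf_kob_chain_length:
  "kobayashi \<Omega> z w = Inf {kob_chain_length cs |cs. kob_chain \<Omega> z w cs}"
  by (simp add: kobayashi_def kob_chain_length_def)

lemma holo_disc_in: "holo_disc \<Omega> f \<Longrightarrow> x \<in> ball 0 1 \<Longrightarrow> f x \<in> \<Omega>"
  by (auto simp: holo_disc_def)

lemma holo_disc_const: "z \<in> \<Omega> \<Longrightarrow> holo_disc \<Omega> (\<lambda>_. z)"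
  by (auto simp: holo_disc_def)

lemma continuous_on_holo_disc: "holo_disc \<Omega> f \<Longrightarrow> continuous_on (ball 0 1) f"
  using continuous_on_vec_lambda[of "ball 0 1" "\<lambda>i z. f z $ i"]
  by (simp add: holo_disc_def holomorphic_on_imp_continuous_on)

lemma kob_chain_Nil [simp]: "\<not> kob_chain \<Omega> z w []"
  by (simp add: kob_chain_def)

lemma kob_chain_Cons:
  "kob_chain \<Omega> z w ((f, a, b) # cs) \<longleftrightarrow>
     holo_disc \<Omega> f \<and> a \<in> ball 0 1 \<and> b \<in> ball 0 1 \<and> f a = z \<and>
     (if cs = [] then f b = w else kob_chain \<Omega> (f b) w cs)"
proof (cases cs)
  case Nil
  then show ?thesis by (auto simp: kob_chain_def)
next
  case (Cons c cs')
  obtain g c1 d1 where c: "c = (g, c1, d1)" by (cases c)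
  have all_nat: "(\<forall>i::nat. P i) \<longleftrightarrow> P 0 \<and> (\<forall>i. P (Suc i))" for P
    by (metis nat.exhaust)
  have "(\<forall>i. Suc i < length ((f, a, b) # cs) \<longrightarrow>
          (case ((f, a, b) # cs) ! i of (f, a, b) \<Rightarrow> f b) =
          (case ((f, a, b) # cs) ! Suc i of (g, c, d) \<Rightarrow> g c))
     \<longleftrightarrow> f b = g c1 \<and> (\<forall>i. Suc i < length cs \<longrightarrow>
          (case cs ! i of (f, a, b) \<Rightarrow> f b) = (case cs ! Suc i of (g, c, d) \<Rightarrow> g c))"
    by (subst all_nat) (simp add: Cons c)
  then show ?thesis
    unfolding kob_chain_def by (auto simp: Cons c)
qed

lemma kob_chain_single:
  "holo_disc \<Omega> f \<Longrightarrow> a \<in> ball 0 1 \<Longrightarrow> b \<in> ball 0 1 \<Longrightarrow> kob_chain \<Omega> (f a) (f b) [(f, a, b)]"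
  by (simp add: kob_chain_Cons)

lemma kob_chain_refl: "z \<in> \<Omega> \<Longrightarrow> kob_chain \<Omega> z z [(\<lambda>_. z, 0, 0)]"
  by (simp add: kob_chain_Cons holo_disc_const)

lemma kob_chain_start_in: "kob_chain \<Omega> z w cs \<Longrightarrow> z \<in> \<Omega>"
  by (cases cs) (auto simp: kob_chain_def holo_disc_def split: prod.splits)

lemma kob_chain_length_nonneg: "kob_chain \<Omega> z w cs \<Longrightarrow> 0 \<le> kob_chain_length cs"
proof (induction cs arbitrary: z)
  case (Cons c cs)
  then show ?case
    by (cases c; cases "cs = []") (auto simp: kob_chain_Cons intro!: add_nonneg_nonneg poincare_dist_nonneg)
qed simp

lemma kob_chain_append:
  "kob_chain \<Omega> z y cs \<Longrightarrow> kob_chain \<Omega> y w ds \<Longrightarrow> kob_chain \<Omega> z w (cs @ ds)"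
proof (induction cs arbitrary: z)
  case (Cons c cs)
  then show ?case
    by (cases c; cases "cs = []"; cases ds) (auto simp: kob_chain_Cons)
qed simp

definition kob_chain_reverse :: "((complex \<Rightarrow> complex^'n) \<times> complex \<times> complex) list \<Rightarrow> _" where
  "kob_chain_reverse cs = rev (map (\<lambda>(f, a, b). (f, b, a)) cs)"

lemma kob_chain_length_reverse: "kob_chain_length (kob_chain_reverse cs) = kob_chain_length cs"
  by (induction cs) (auto simp: kob_chain_reverse_def poincare_dist_commute)

lemma kob_chain_reverse: "kob_chain \<Omega> z w cs \<Longrightarrow> kob_chain \<Omega> w z (kob_chain_reverse cs)"
proof (induction cs arbitrary: z)
  case (Cons c cs)
  obtain f a b where c: "c = (f, a, b)" by (cases c)
  have back_step: "kob_chain \<Omega> (f b) z [(f, b, a)]"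
    using Cons.prems by (auto simp: c kob_chain_Cons)
  show ?case
  proof (cases "cs = []")
    case True
    then show ?thesis using Cons.prems back_step by (auto simp: c kob_chain_Cons kob_chain_reverse_def)
  next
    case False
    then have "kob_chain \<Omega> w (f b) (kob_chain_reverse cs)"
      using Cons by (auto simp: c kob_chain_Cons)
    from kob_chain_append[OF this back_step] show ?thesis
      by (simp add: c kob_chain_reverse_def)
  qed
qed simp

lemma norm_vector_scalar_mult: "norm (c *s (x::complex^'n)) = norm c * norm x"
  by (simp add: norm_vec_def norm_mult L2_set_right_distrib)

text \<open>The witness is the affine disc of Euclidean radius \<open>r\<close> centred at \<open>q\<close> through \<open>w\<close>.\<close>
lemma kob_chain_in_ball:
  assumes "ball q r \<subseteq> \<Omega>" "w \<in> ball q r"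
  obtains cs where "kob_chain \<Omega> q w cs" "kob_chain_length cs \<le> artanh (dist q w / r)"
proof (cases "w = q")
  case True
  then have "q \<in> \<Omega>" using assms by auto
  then show ?thesis using True kob_chain_refl[of q \<Omega>] that by fastforce
next
  case False
  define u where "u = w - q"
  define d where "d = norm u"
  have d: "0 < d" using False by (simp add: d_def u_def)
  have dr: "d < r" using assms(2) by (simp add: d_def u_def dist_norm norm_minus_commute)
  then have r: "0 < r" using d by linarith
  define f where "f \<zeta> = q + (\<zeta> * of_real (r / d)) *s u" for \<zeta>
  have "holo_disc \<Omega> f"
    unfolding holo_disc_def
  proof
    show "\<forall>i. (\<lambda>\<zeta>. f \<zeta> $ i) holomorphic_on ball 0 1"
      by (auto simp: f_def intro!: holomorphic_intros)
    have "dist q (f \<zeta>) = norm \<zeta> * r" for \<zeta>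
      using d r by (simp add: f_def dist_norm norm_vector_scalar_mult norm_mult d_def del: of_real_divide)
    then show "f ` ball 0 1 \<subseteq> \<Omega>"
      using assms(1) d dr by (auto simp: subset_eq)
  qed
  moreover have "of_real (d / r) \<in> ball (0::complex) 1" using d dr by (simp add: norm_divide)
  moreover have "f 0 = q" by (simp add: f_def)
  moreover have "f (of_real (d / r)) = w"
  proof -
    have "of_real (d / r) * of_real (r / d) = (1::complex)"
      using d r by (simp flip: of_real_mult)
    then show ?thesis by (simp add: f_def u_def)
  qed
  ultimately have "kob_chain \<Omega> q w [(f, 0, of_real (d / r))]"
    by (metis kob_chain_single mem_ball_0 norm_zero zero_less_one)
  moreover have "kob_chain_length [(f, 0, of_real (d / r))] = artanh (dist q w / r)"
    using d r by (simp add: poincare_dist_0_left d_def u_def dist_norm norm_minus_commute norm_divide)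
  ultimately show ?thesis using that by simp
qed

section \<open>The Kobayashi pseudodistance of a domain\<close>

locale kobayashi_domain =
  fixes \<Omega> :: "(complex^'n) set"
  assumes open_domain: "open \<Omega>" and connected_domain: "connected \<Omega>"
begin

abbreviation k :: "complex^'n \<Rightarrow> complex^'n \<Rightarrow> real" where
  "k \<equiv> kobayashi \<Omega>"

lemma kob_chain_exists:
  assumes "z \<in> \<Omega>" "w \<in> \<Omega>"
  shows "\<exists>cs. kob_chain \<Omega> z w cs"
proof (rule connected_induction_simple[OF connected_domain assms,
      where P = "\<lambda>x. \<exists>cs. kob_chain \<Omega> z x cs"])
  show "\<exists>cs. kob_chain \<Omega> z z cs" using kob_chain_refl[OF assms(1)] by blast
next
  fix a assume "a \<in> \<Omega>"
  then obtain r where r: "r > 0" "ball a r \<subseteq> \<Omega>" using open_domain open_contains_ball by blast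
  show "\<exists>T. openin (top_of_set \<Omega>) T \<and> a \<in> T \<and>
          (\<forall>x\<in>T. \<forall>y\<in>T. (\<exists>cs. kob_chain \<Omega> z x cs) \<longrightarrow> (\<exists>cs. kob_chain \<Omega> z y cs))"
  proof (intro exI[of _ "ball a r"] conjI ballI impI)
    show "openin (top_of_set \<Omega>) (ball a r)" using r by (simp add: open_subset)
    show "a \<in> ball a r" using r by simp
  next
    fix x y assume "x \<in> ball a r" "y \<in> ball a r" "\<exists>cs. kob_chain \<Omega> z x cs"
    then obtain c0 c1 c2 where "kob_chain \<Omega> z x c0" "kob_chain \<Omega> a x c1" "kob_chain \<Omega> a y c2"
      using kob_chain_in_ball[OF r(2)] by metis
    then show "\<exists>cs. kob_chain \<Omega> z y cs"
      using kob_chain_append kob_chain_reverse by metis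
  qed
qed

lemma kobayashi_le_kob_chain_length: "kob_chain \<Omega> z w cs \<Longrightarrow> k z w \<le> kob_chain_length cs"
  unfolding kobayashi_eq_Inf_kob_chain_length
  by (rule cInf_lower) (auto intro!: bdd_belowI[of _ 0] kob_chain_length_nonneg)

lemma kobayashi_nonneg: "z \<in> \<Omega> \<Longrightarrow> w \<in> \<Omega> \<Longrightarrow> 0 \<le> k z w"
  unfolding kobayashi_eq_Inf_kob_chain_length using kob_chain_exists[of z w]
  by (intro cInf_greatest) (auto intro: kob_chain_length_nonneg)

lemma kobayashi_approx:
  assumes "z \<in> \<Omega>" "w \<in> \<Omega>" "e > 0"
  obtains cs where "kob_chain \<Omega> z w cs" "kob_chain_length cs < k z w + e"
proof -
  have "{kob_chain_length cs |cs. kob_chain \<Omega> z w cs} \<noteq> {}"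
    using kob_chain_exists[OF assms(1,2)] by blast
  from cInf_lessD[OF this, of "k z w + e"] show ?thesis
    using assms(3) that by (auto simp: kobayashi_eq_Inf_kob_chain_length)
qed

lemma kobayashi_refl [simp]: "z \<in> \<Omega> \<Longrightarrow> k z z = 0"
  using kobayashi_le_kob_chain_length[OF kob_chain_refl[of z \<Omega>]] kobayashi_nonneg[of z z] by simp

lemma kobayashi_commute: "k z w = k w z"
proof -
  have sub: "{kob_chain_length cs |cs. kob_chain \<Omega> z w cs}
               \<subseteq> {kob_chain_length cs |cs. kob_chain \<Omega> w z cs}" for z w
  proof
    fix v assume "v \<in> {kob_chain_length cs |cs. kob_chain \<Omega> z w cs}"
    then obtain cs where "v = kob_chain_length cs" "kob_chain \<Omega> z w cs" by blast
    then show "v \<in> {kob_chain_length cs |cs. kob_chain \<Omega> w z cs}"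
      by (intro CollectI exI[of _ "kob_chain_reverse cs"])
        (simp add: kob_chain_length_reverse kob_chain_reverse)
  qed
  show ?thesis
    unfolding kobayashi_eq_Inf_kob_chain_length using subset_antisym[OF sub[of z w] sub[of w z]] by simp
qed

lemma kobayashi_triangle:
  assumes "x \<in> \<Omega>" "y \<in> \<Omega>" "z \<in> \<Omega>"
  shows "k x z \<le> k x y + k y z"
proof (rule field_le_epsilon)
  fix e :: real assume "e > 0"
  then obtain cs ds where "kob_chain \<Omega> x y cs" "kob_chain_length cs < k x y + e / 2"
    "kob_chain \<Omega> y z ds" "kob_chain_length ds < k y z + e / 2"
    using kobayashi_approx[OF assms(1,2), of "e / 2"] kobayashi_approx[OF assms(2,3), of "e / 2"]
    by (metis half_gt_zero)
  then show "k x z \<le> k x y + k y z + e"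
    using kobayashi_le_kob_chain_length[OF kob_chain_append] by fastforce
qed

lemma kobayashi_holo_disc_le:
  "holo_disc \<Omega> f \<Longrightarrow> a \<in> ball 0 1 \<Longrightarrow> b \<in> ball 0 1 \<Longrightarrow> k (f a) (f b) \<le> poincare_dist a b"
  using kobayashi_le_kob_chain_length[OF kob_chain_single[of \<Omega> f a b]] by simp

lemma kobayashi_le_artanh_dist:
  assumes "ball q r \<subseteq> \<Omega>" "w \<in> ball q r"
  shows "k q w \<le> artanh (dist q w / r)"
  using kob_chain_in_ball[OF assms] kobayashi_le_kob_chain_length by (metis order_trans)

lemma tendsto_kobayashi_0:
  assumes "z \<in> \<Omega>" "(s \<longlongrightarrow> z) F"
  shows "((\<lambda>x. k z (s x)) \<longlongrightarrow> 0) F"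
proof -
  obtain r where r: "r > 0" "ball z r \<subseteq> \<Omega>" using open_domain assms(1) open_contains_ball by blast
  have near: "eventually (\<lambda>x. s x \<in> ball z r) F"
    using assms(2) r(1) by (auto simp: tendsto_iff dist_commute)
  have "((\<lambda>x. artanh (dist z (s x) / r)) \<longlongrightarrow> artanh (dist z z / r)) F"
    using r(1) by (intro tendsto_intros assms(2)) auto
  then have upper: "((\<lambda>x. artanh (dist z (s x) / r)) \<longlongrightarrow> 0) F" by simp
  show ?thesis
  proof (rule tendsto_sandwich[OF _ _ tendsto_const upper])
    show "\<forall>\<^sub>F x in F. 0 \<le> k z (s x)"
      using near by eventually_elim (use r assms(1) in \<open>auto intro!: kobayashi_nonneg\<close>)
    show "\<forall>\<^sub>F x in F. k z (s x) \<le> artanh (dist z (s x) / r)"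
      using near by eventually_elim (use r in \<open>auto intro!: kobayashi_le_artanh_dist\<close>)
  qed
qed

lemma continuous_on_kobayashi: "continuous_on (\<Omega> \<times> \<Omega>) (\<lambda>x. k (fst x) (snd x))"
  unfolding continuous_on_def
proof (intro ballI)
  fix x assume "x \<in> \<Omega> \<times> \<Omega>"
  then obtain z w where x: "x = (z, w)" and z: "z \<in> \<Omega>" and w: "w \<in> \<Omega>" by auto
  define F where "F = at x within \<Omega> \<times> \<Omega>"
  have "(fst \<longlongrightarrow> z) F" "(snd \<longlongrightarrow> w) F"
    unfolding F_def x using tendsto_fst tendsto_snd tendsto_ident_at[of "(z, w)" "\<Omega> \<times> \<Omega>"]
    by fastforce+
  then have "((\<lambda>y. k z (fst y) + k w (snd y)) \<longlongrightarrow> 0 + 0) F"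
    using z w by (intro tendsto_add tendsto_kobayashi_0)
  moreover have "\<forall>\<^sub>F y in F. norm (k (fst y) (snd y) - k z w) \<le> k z (fst y) + k w (snd y)"
    unfolding F_def eventually_at_filter
  proof (intro always_eventually allI impI)
    fix y assume "y \<in> \<Omega> \<times> \<Omega>"
    then obtain a b where y: "y = (a, b)" and a: "a \<in> \<Omega>" and b: "b \<in> \<Omega>" by auto
    show "norm (k (fst y) (snd y) - k z w) \<le> k z (fst y) + k w (snd y)"
      using kobayashi_triangle[OF z a w] kobayashi_triangle[OF a b w]
        kobayashi_triangle[OF a z b] kobayashi_triangle[OF z w b]
      by (simp add: y kobayashi_commute[of a z] kobayashi_commute[of b w])
  qed
  ultimately have "((\<lambda>y. k (fst y) (snd y) - k z w) \<longlongrightarrow> 0) F"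
    by (auto intro: Lim_null_comparison)
  then show "((\<lambda>y. k (fst y) (snd y)) \<longlongrightarrow> k (fst x) (snd x)) (at x within \<Omega> \<times> \<Omega>)"
    unfolding F_def x by (simp add: LIM_zero_iff)
qed

lemma continuous_on_kobayashi_right:
  assumes "p \<in> \<Omega>"
  shows "continuous_on \<Omega> (k p)"
proof -
  have "continuous_on \<Omega> (\<lambda>w. (\<lambda>x. k (fst x) (snd x)) (p, w))"
    by (rule continuous_on_compose2[OF continuous_on_kobayashi]) (use assms in \<open>auto intro!: continuous_intros\<close>)
  then show ?thesis by simp
qed

lemma open_kobayashi_ball:
  assumes "c \<in> \<Omega>"
  shows "open {w \<in> \<Omega>. k c w < e}"
proof -
  have "open (\<Omega> \<inter> k c -` {..<e})"
    by (intro continuous_open_preimage continuous_on_kobayashi_right assms open_domain open_lessThan)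
  moreover have "\<Omega> \<inter> k c -` {..<e} = {w \<in> \<Omega>. k c w < e}" by auto
  ultimately show ?thesis by simp
qed

lemma kob_chain_split:
  assumes "kob_chain \<Omega> z w cs" "0 \<le> s" "s \<le> kob_chain_length cs"
  shows "\<exists>y\<in>\<Omega>. k z y \<le> s \<and> k y w \<le> kob_chain_length cs - s"
  using assms
proof (induction cs arbitrary: z s)
  case (Cons c cs)
  obtain f a b where c: "c = (f, a, b)" by (cases c)
  have f: "holo_disc \<Omega> f" and a: "a \<in> ball 0 1" and b: "b \<in> ball 0 1" and z: "f a = z"
    and rest: "if cs = [] then f b = w else kob_chain \<Omega> (f b) w cs"
    using Cons.prems(1) by (auto simp: c kob_chain_Cons)
  show ?case
  proof (cases "s \<le> poincare_dist a b")
    case True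
    obtain \<gamma> :: "real \<Rightarrow> complex"
      where \<gamma>: "continuous_on {0..1} \<gamma>" "\<gamma> ` {0..1} \<subseteq> ball 0 1" "\<gamma> 0 = a" "\<gamma> 1 = b"
      "continuous_on {0..1} (\<lambda>t. poincare_dist a (\<gamma> t))"
      "\<And>t. t \<in> {0..1} \<Longrightarrow> poincare_dist a (\<gamma> t) + poincare_dist (\<gamma> t) b = poincare_dist a b"
      by (rule poincare_geodesic[OF a b]) blast
    have "\<exists>t. 0 \<le> t \<and> t \<le> 1 \<and> poincare_dist a (\<gamma> t) = s"
      by (rule IVT') (use \<gamma>(3-5) Cons.prems(2) True in auto)
    then obtain t where t: "t \<in> {0..1}" "poincare_dist a (\<gamma> t) = s" by auto
    have \<gamma>t: "\<gamma> t \<in> ball 0 1" using \<gamma>(2) t(1) by (auto simp: image_subset_iff)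
    have "k z (f (\<gamma> t)) \<le> s"
      using kobayashi_holo_disc_le[OF f a \<gamma>t] z t(2) by simp
    moreover have "k (f (\<gamma> t)) w \<le> poincare_dist (\<gamma> t) b + kob_chain_length cs"
      using kobayashi_le_kob_chain_length[of "f (\<gamma> t)" w "(f, \<gamma> t, b) # cs"] rest f \<gamma>t b
      by (simp add: kob_chain_Cons)
    ultimately show ?thesis
      using holo_disc_in[OF f \<gamma>t] \<gamma>(6)[OF t(1)] t(2)
      by (intro bexI[of _ "f (\<gamma> t)"]) (auto simp: c)
  next
    case False
    then have "cs \<noteq> []" using Cons.prems(3) by (auto simp: c)
    then have cs: "kob_chain \<Omega> (f b) w cs" using rest by simp
    then obtain y where y: "y \<in> \<Omega>" "k (f b) y \<le> s - poincare_dist a b"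
      "k y w \<le> kob_chain_length cs - (s - poincare_dist a b)"
      using Cons.IH[OF cs, of "s - poincare_dist a b"] False Cons.prems(3) by (auto simp: c)
    have "k z y \<le> k z (f b) + k (f b) y"
      using kobayashi_triangle kob_chain_start_in[OF Cons.prems(1)] holo_disc_in[OF f b] y(1) by blast
    also have "k z (f b) \<le> poincare_dist a b"
      using kobayashi_holo_disc_le[OF f a b] z by simp
    finally show ?thesis using y by (intro bexI[of _ y]) (auto simp: c)
  qed
qed simp

lemma kob_chain_crosses_sphere:
  assumes "kob_chain \<Omega> z w cs" "dist q z < \<delta>" "\<delta> \<le> dist q w"
  shows "\<exists>s\<in>\<Omega>. dist q s = \<delta> \<and> k z s \<le> kob_chain_length cs"
  using assms
proof (induction cs arbitrary: z)
  case (Cons c cs)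
  obtain f a b where c: "c = (f, a, b)" by (cases c)
  have f: "holo_disc \<Omega> f" and a: "a \<in> ball 0 1" and b: "b \<in> ball 0 1" and z: "f a = z"
    and rest: "if cs = [] then f b = w else kob_chain \<Omega> (f b) w cs"
    using Cons.prems(1) by (auto simp: c kob_chain_Cons)
  have cs_nonneg: "0 \<le> kob_chain_length cs"
    using rest kob_chain_length_nonneg by (cases "cs = []") auto
  show ?case
  proof (cases "\<delta> \<le> dist q (f b)")
    case True
    obtain \<gamma> :: "real \<Rightarrow> complex"
      where \<gamma>: "continuous_on {0..1} \<gamma>" "\<gamma> ` {0..1} \<subseteq> ball 0 1" "\<gamma> 0 = a" "\<gamma> 1 = b"
      "\<And>t. t \<in> {0..1} \<Longrightarrow> poincare_dist a (\<gamma> t) + poincare_dist (\<gamma> t) b = poincare_dist a b"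
      by (rule poincare_geodesic[OF a b]) blast
    have "continuous_on {0..1} (\<lambda>t. dist q (f (\<gamma> t)))"
      by (intro continuous_intros continuous_on_compose2[OF continuous_on_holo_disc[OF f] \<gamma>(1,2)])
    then have "\<exists>t. 0 \<le> t \<and> t \<le> 1 \<and> dist q (f (\<gamma> t)) = \<delta>"
      by (intro IVT') (use \<gamma>(3,4) z True Cons.prems(2) in auto)
    then obtain t where t: "t \<in> {0..1}" "dist q (f (\<gamma> t)) = \<delta>" by auto
    have \<gamma>t: "\<gamma> t \<in> ball 0 1" using \<gamma>(2) t(1) by (auto simp: image_subset_iff)
    have "k z (f (\<gamma> t)) \<le> poincare_dist a (\<gamma> t)"
      using kobayashi_holo_disc_le[OF f a \<gamma>t] z by simp
    also have "\<dots> \<le> poincare_dist a b"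
      using \<gamma>(5)[OF t(1)] poincare_dist_nonneg[OF \<gamma>t b] by linarith
    finally show ?thesis
      using t(2) holo_disc_in[OF f \<gamma>t] cs_nonneg
      by (intro bexI[of _ "f (\<gamma> t)"]) (auto simp: c)
  next
    case False
    then have "cs \<noteq> []" using rest Cons.prems(3) by auto
    then have cs: "kob_chain \<Omega> (f b) w cs" using rest by simp
    obtain s where s: "s \<in> \<Omega>" "dist q s = \<delta>" "k (f b) s \<le> kob_chain_length cs"
      using Cons.IH[OF cs _ Cons.prems(3)] False by auto
    have "k z s \<le> k z (f b) + k (f b) s"
      using kobayashi_triangle kob_chain_start_in[OF Cons.prems(1)] holo_disc_in[OF f b] s(1) by blast
    also have "k z (f b) \<le> poincare_dist a b"
      using kobayashi_holo_disc_le[OF f a b] z by simp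
    finally show ?thesis using s by (intro bexI[of _ s]) (auto simp: c)
  qed
qed simp

definition kobayashi_cball :: "complex^'n \<Rightarrow> real \<Rightarrow> (complex^'n) set" where
  "kobayashi_cball p r = {z \<in> \<Omega>. k p z \<le> r}"

lemma closedin_kobayashi_cball:
  assumes "p \<in> \<Omega>"
  shows "closedin (top_of_set \<Omega>) (kobayashi_cball p r)"
proof -
  have "closedin (top_of_set \<Omega>) (\<Omega> \<inter> k p -` {..r})"
    by (rule continuous_closedin_preimage[OF continuous_on_kobayashi_right[OF assms] closed_atMost])
  moreover have "\<Omega> \<inter> k p -` {..r} = kobayashi_cball p r"
    by (auto simp: kobayashi_cball_def)
  ultimately show ?thesis by simp
qed

lemma compact_kobayashi_cball_if_subset:
  assumes "p \<in> \<Omega>" "kobayashi_cball p r \<subseteq> K" "compact K" "K \<subseteq> \<Omega>"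
  shows "compact (kobayashi_cball p r)"
proof -
  obtain T where "closed T" "kobayashi_cball p r = \<Omega> \<inter> T"
    using closedin_kobayashi_cball[OF assms(1)] by (auto simp: closedin_closed)
  then have "kobayashi_cball p r = K \<inter> T" using assms(2,4) by blast
  then show ?thesis
    using compact_Int_closed[OF assms(3) \<open>closed T\<close>] by (simp only:)
qed

text \<open>Splitting a nearly minimal chain from \<open>p\<close> to \<open>z\<close> at distance \<open>r\<close>.\<close>
lemma kobayashi_cball_approach:
  assumes "p \<in> \<Omega>" "z \<in> \<Omega>" "0 \<le> r" "r \<le> k p z" "0 < e"
  obtains y where "y \<in> kobayashi_cball p r" "k y z < k p z - r + e"
proof -
  obtain cs where cs: "kob_chain \<Omega> p z cs" "kob_chain_length cs < k p z + e"
    using kobayashi_approx[OF assms(1,2,5)] .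
  moreover have "r \<le> kob_chain_length cs"
    using kobayashi_le_kob_chain_length[OF cs(1)] assms(4) by simp
  ultimately obtain y where "y \<in> \<Omega>" "k p y \<le> r" "k y z \<le> kob_chain_length cs - r"
    using kob_chain_split[OF cs(1) assms(3)] by blast
  then have "y \<in> kobayashi_cball p r" "k y z < k p z - r + e"
    using cs(2) by (auto simp: kobayashi_cball_def)
  then show ?thesis by (rule that)
qed

lemma kobayashi_cball_near:
  assumes p: "p \<in> \<Omega>" and z: "z \<in> kobayashi_cball p (r + d)"
    and r: "0 \<le> r" and d: "0 \<le> d" and e: "0 < e"
  obtains y where "y \<in> kobayashi_cball p r" "k y z < d + e"
proof (cases "k p z \<le> r")
  case True
  then have "z \<in> kobayashi_cball p r" using z by (simp add: kobayashi_cball_def)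
  then show ?thesis by (rule that) (use z d e in \<open>simp add: kobayashi_cball_def\<close>)
next
  case False
  have z': "z \<in> \<Omega>" "k p z \<le> r + d" using z by (auto simp: kobayashi_cball_def)
  from False have "r \<le> k p z" by simp
  then obtain y where y: "y \<in> kobayashi_cball p r" "k y z < k p z - r + e"
    by (rule kobayashi_cball_approach[OF p z'(1) r _ e])
  show ?thesis by (rule that[OF y(1)]) (use y(2) z'(2) in linarith)
qed

end

section \<open>Complete hyperbolic domains\<close>

locale complete_hyperbolic_domain = kobayashi_domain +
  assumes hyperbolic: "kobayashi_hyperbolic \<Omega>" and complete: "kobayashi_complete \<Omega>"
begin

lemma kobayashi_pos: "z \<in> \<Omega> \<Longrightarrow> w \<in> \<Omega> \<Longrightarrow> z \<noteq> w \<Longrightarrow> 0 < k z w"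
  using hyperbolic by (auto simp: kobayashi_hyperbolic_def)

lemma kobayashi_sphere_lower_bound:
  assumes C: "compact C" and \<delta>: "0 < \<delta>" and sub: "\<And>q. q \<in> C \<Longrightarrow> cball q \<delta> \<subseteq> \<Omega>"
  obtains \<eta> where "0 < \<eta>" "\<And>q s. q \<in> C \<Longrightarrow> dist q s = \<delta> \<Longrightarrow> \<eta> \<le> k q s"
proof (cases "C = {}")
  case True
  then show ?thesis using that[of 1] by auto
next
  case False
  define S where "S = (\<lambda>(q, y). (q, q + y)) ` (C \<times> sphere 0 \<delta>)"
  have S: "(q, s) \<in> S" if "q \<in> C" "dist q s = \<delta>" for q s
  proof -
    have "(q, s - q) \<in> C \<times> sphere 0 \<delta>"
      using that by (simp add: dist_norm norm_minus_commute)
    then show ?thesis unfolding S_def by (rule rev_image_eqI) simp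
  qed
  have "compact S"
    unfolding S_def using C by (intro compact_continuous_image compact_Times compact_sphere)
      (auto intro!: continuous_intros simp: case_prod_beta')
  moreover have "S \<noteq> {}"
    using False \<delta> by (auto simp: S_def sphere_eq_empty)
  moreover have S_sub: "S \<subseteq> \<Omega> \<times> \<Omega>"
    using sub \<delta> by (fastforce simp: S_def dist_norm)
  ultimately obtain x where x: "x \<in> S" "\<And>y. y \<in> S \<Longrightarrow> k (fst x) (snd x) \<le> k (fst y) (snd y)"
    using continuous_attains_inf[of S "\<lambda>x. k (fst x) (snd x)"]
      continuous_on_subset[OF continuous_on_kobayashi S_sub]
    by auto
  have "fst x \<noteq> snd x" "fst x \<in> \<Omega>" "snd x \<in> \<Omega>"
    using x(1) S_sub \<delta> by (auto simp: S_def)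
  then have "0 < k (fst x) (snd x)" by (rule kobayashi_pos[rotated 2])
  then show ?thesis
    using that x(2) S by fastforce
qed

text \<open>Hyperbolicity makes small Kobayashi distance force small Euclidean distance, locally
  uniformly: a nearly minimal chain leaving a Euclidean ball has to cross its boundary sphere.\<close>
lemma dist_less_if_kobayashi_less:
  assumes C: "compact C" and \<delta>: "0 < \<delta>" and sub: "\<And>q. q \<in> C \<Longrightarrow> cball q \<delta> \<subseteq> \<Omega>"
  shows "\<exists>\<eta>>0. \<forall>q\<in>C. \<forall>w\<in>\<Omega>. k q w < \<eta> \<longrightarrow> dist q w < \<delta>"
proof -
  obtain \<eta> where \<eta>: "0 < \<eta>" "\<And>q s. q \<in> C \<Longrightarrow> dist q s = \<delta> \<Longrightarrow> \<eta> \<le> k q s"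
    using kobayashi_sphere_lower_bound[of C \<delta>] assms by blast
  have "dist q w < \<delta>" if q: "q \<in> C" and w: "w \<in> \<Omega>" and less: "k q w < \<eta>" for q w
  proof (rule ccontr)
    assume far: "\<not> dist q w < \<delta>"
    have "q \<in> \<Omega>" using sub[OF q] \<delta> by auto
    then obtain cs where cs: "kob_chain \<Omega> q w cs" "kob_chain_length cs < \<eta>"
      using kobayashi_approx[OF _ w, of q "\<eta> - k q w"] less by auto
    then obtain s where "dist q s = \<delta>" "k q s \<le> kob_chain_length cs"
      using kob_chain_crosses_sphere[OF cs(1), of q \<delta>] \<delta> far by auto
    then show False using \<eta>(2)[OF q] cs(2) by fastforce
  qed
  then show ?thesis using \<eta>(1) by blast
qed

lemma tendsto_if_kobayashi_tendsto_0:
  assumes l: "l \<in> \<Omega>" and ev: "eventually (\<lambda>x. s x \<in> \<Omega>) F"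
    and lim: "((\<lambda>x. k l (s x)) \<longlongrightarrow> 0) F"
  shows "(s \<longlongrightarrow> l) F"
proof (rule tendstoI)
  fix e :: real assume e: "e > 0"
  obtain r where r: "r > 0" "cball l r \<subseteq> \<Omega>" using open_domain l open_contains_cball by blast
  obtain \<eta> where \<eta>: "\<eta> > 0" "\<forall>q\<in>{l}. \<forall>w\<in>\<Omega>. k q w < \<eta> \<longrightarrow> dist q w < min e r"
    using dist_less_if_kobayashi_less[of "{l}" "min e r"] r e by force
  have "eventually (\<lambda>x. k l (s x) < \<eta>) F"
    using order_tendstoD(2)[OF lim \<eta>(1)] .
  with ev show "eventually (\<lambda>x. dist (s x) l < e) F"
    by eventually_elim (use \<eta>(2) in \<open>auto simp: dist_commute\<close>)
qed

lemma kobayashi_cball_0: "p \<in> \<Omega> \<Longrightarrow> kobayashi_cball p 0 = {p}"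
  using kobayashi_pos by (force simp: kobayashi_cball_def)

definition kobayashi_metric where
  "kobayashi_metric x y = (if x \<in> \<Omega> \<and> y \<in> \<Omega> then k x y else 0)"

lemma Metric_space_kobayashi_metric: "Metric_space \<Omega> kobayashi_metric"
proof
  show "0 \<le> kobayashi_metric x y" for x y
    by (simp add: kobayashi_metric_def kobayashi_nonneg)
  show "kobayashi_metric x y = kobayashi_metric y x" for x y
    by (auto simp: kobayashi_metric_def kobayashi_commute)
  show "kobayashi_metric x y = 0 \<longleftrightarrow> x = y" if "x \<in> \<Omega>" "y \<in> \<Omega>" for x y
    using that kobayashi_pos[of x y] by (cases "x = y") (auto simp: kobayashi_metric_def)
  show "kobayashi_metric x z \<le> kobayashi_metric x y + kobayashi_metric y z"
    if "x \<in> \<Omega>" "y \<in> \<Omega>" "z \<in> \<Omega>" for x y z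
    using that kobayashi_triangle by (simp add: kobayashi_metric_def)
qed

sublocale kobayashi: Metric_space \<Omega> kobayashi_metric
  by (rule Metric_space_kobayashi_metric)

lemma compact_if_mtotally_bounded:
  assumes "closedin (top_of_set \<Omega>) A" "kobayashi.mtotally_bounded A"
  shows "compact A"
  unfolding compact_eq_seq_compact_metric seq_compact_def
proof (intro allI impI)
  fix f :: "nat \<Rightarrow> _" assume f: "\<forall>n. f n \<in> A"
  have A: "A \<subseteq> \<Omega>" using assms(1) by (rule closedin_imp_subset)
  then have fO: "f n \<in> \<Omega>" for n using f by blast
  obtain r where r: "strict_mono r" and "kobayashi.MCauchy (f \<circ> r)"
    using assms(2) f unfolding kobayashi.mtotally_bounded_sequentially by blast
  then have "\<forall>e>0. \<exists>N. \<forall>m\<ge>N. \<forall>n\<ge>N. k ((f \<circ> r) m) ((f \<circ> r) n) < e"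
    using fO unfolding kobayashi.MCauchy_def by (simp add: kobayashi_metric_def)
  then obtain l where l: "l \<in> \<Omega>" and "(\<lambda>n. k ((f \<circ> r) n) l) \<longlonglongrightarrow> 0"
    using complete fO unfolding kobayashi_complete_def by (metis comp_apply)
  then have conv: "(f \<circ> r) \<longlonglongrightarrow> l"
    using fO by (intro tendsto_if_kobayashi_tendsto_0) (auto simp: kobayashi_commute)
  obtain T where "closed T" "A = \<Omega> \<inter> T"
    using assms(1) by (auto simp: closedin_closed)
  then have "l \<in> A"
    using closed_sequentially[OF \<open>closed T\<close> _ conv] f l by auto
  then show "\<exists>l\<in>A. \<exists>r::nat\<Rightarrow>nat. strict_mono r \<and> (f \<circ> r) \<longlonglongrightarrow> l"
    using r conv by blast
qed

lemma mtotally_bounded_kobayashi_cball: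
  assumes p: "p \<in> \<Omega>" and \<rho>: "0 < \<rho>" and below: "\<And>r. r < \<rho> \<Longrightarrow> compact (kobayashi_cball p r)"
  shows "kobayashi.mtotally_bounded (kobayashi_cball p \<rho>)"
  unfolding kobayashi.mtotally_bounded_def
proof (intro allI impI)
  fix \<epsilon> :: real assume \<epsilon>: "\<epsilon> > 0"
  define r where "r = max 0 (\<rho> - \<epsilon> / 2)"
  have r: "0 \<le> r" "r < \<rho>" "\<rho> - r \<le> \<epsilon> / 2" using \<rho> \<epsilon> by (auto simp: r_def split: split_max)
  define U where "U c = {w \<in> \<Omega>. k c w < \<epsilon> / 4}" for c
  have "open (U c)" if "c \<in> kobayashi_cball p r" for c
    using that unfolding U_def by (intro open_kobayashi_ball) (simp add: kobayashi_cball_def)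
  moreover have "kobayashi_cball p r \<subseteq> (\<Union>c\<in>kobayashi_cball p r. U c)"
    using \<epsilon> by (force simp: U_def kobayashi_cball_def)
  ultimately obtain K where K: "K \<subseteq> kobayashi_cball p r" "finite K"
    "kobayashi_cball p r \<subseteq> (\<Union>c\<in>K. U c)"
    by (rule compactE_image[OF below[OF r(2)]])
  have "kobayashi_cball p \<rho> \<subseteq> (\<Union>c\<in>K. kobayashi.mball c \<epsilon>)"
  proof
    fix z assume "z \<in> kobayashi_cball p \<rho>"
    then have z: "z \<in> kobayashi_cball p (r + (\<rho> - r))" "z \<in> \<Omega>"
      by (auto simp: kobayashi_cball_def)
    obtain y where y: "y \<in> kobayashi_cball p r" "k y z < (\<rho> - r) + \<epsilon> / 4"
      by (rule kobayashi_cball_near[OF p z(1) r(1), where e = "\<epsilon> / 4"]) (use r(2) \<epsilon> in auto)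
    then obtain c where c: "c \<in> K" "k c y < \<epsilon> / 4" "c \<in> \<Omega>" "y \<in> \<Omega>"
      using K by (force simp: U_def kobayashi_cball_def)
    then have "k c z < \<epsilon>"
      using kobayashi_triangle[of c y z] z(2) y(2) r(3) by simp
    then show "z \<in> (\<Union>c\<in>K. kobayashi.mball c \<epsilon>)"
      using c z(2) by (auto simp: kobayashi_metric_def)
  qed
  moreover have "K \<subseteq> kobayashi_cball p \<rho>"
    using K(1) r(2) by (auto simp: kobayashi_cball_def)
  ultimately show "\<exists>K. finite K \<and> K \<subseteq> kobayashi_cball p \<rho> \<and>
                     kobayashi_cball p \<rho> \<subseteq> (\<Union>x\<in>K. kobayashi.mball x \<epsilon>)"
    using K(2) by blast
qed

lemma compact_kobayashi_cball_nonpos: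
  assumes p: "p \<in> \<Omega>" and r: "r \<le> 0"
  shows "compact (kobayashi_cball p r)"
proof -
  have "kobayashi_cball p r \<subseteq> kobayashi_cball p 0"
    using r by (auto simp: kobayashi_cball_def)
  then have "finite (kobayashi_cball p r)"
    unfolding kobayashi_cball_0[OF p] using finite_subset by blast
  then show ?thesis by (rule finite_imp_compact)
qed

lemma compact_kobayashi_cball_extend:
  assumes p: "p \<in> \<Omega>" and r: "0 \<le> r" and C: "compact (kobayashi_cball p r)"
  obtains \<eta> where "0 < \<eta>" "compact (kobayashi_cball p (r + \<eta>))"
proof -
  have "kobayashi_cball p r \<subseteq> \<Omega>" by (auto simp: kobayashi_cball_def)
  then obtain \<delta> where \<delta>: "0 < \<delta>" "(\<Union>x\<in>kobayashi_cball p r. cball x \<delta>) \<subseteq> \<Omega>"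
    using compact_subset_open_imp_cball_epsilon_subset[OF C open_domain] by blast
  obtain \<eta> where \<eta>: "0 < \<eta>"
    "\<forall>q\<in>kobayashi_cball p r. \<forall>w\<in>\<Omega>. k q w < \<eta> \<longrightarrow> dist q w < \<delta>"
    using dist_less_if_kobayashi_less[OF C \<delta>(1)] \<delta>(2) by blast
  define K where "K = (\<Union>x\<in>kobayashi_cball p r. \<Union>y\<in>cball 0 \<delta>. {x + y})"
  have "compact K" unfolding K_def by (intro compact_sums' C compact_cball)
  moreover have "K \<subseteq> \<Omega>" using \<delta>(2) by (force simp: K_def dist_norm)
  moreover have "kobayashi_cball p (r + \<eta> / 2) \<subseteq> K"
  proof
    fix z assume z: "z \<in> kobayashi_cball p (r + \<eta> / 2)"
    obtain y where y: "y \<in> kobayashi_cball p r" "k y z < \<eta> / 2 + \<eta> / 2"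
      by (rule kobayashi_cball_near[OF p z r, where e = "\<eta> / 2"]) (use \<eta>(1) in auto)
    then have "dist y z < \<delta>" using \<eta>(2) z by (auto simp: kobayashi_cball_def)
    then show "z \<in> K"
      unfolding K_def using y(1)
      by (intro UN_I[of y] UN_I[of "z - y"]) (auto simp: dist_norm norm_minus_commute)
  qed
  ultimately show ?thesis
    using that[of "\<eta> / 2"] \<eta>(1) compact_kobayashi_cball_if_subset[OF p] by auto
qed

text \<open>The Hopf--Rinow argument: the set of radii of non-compact balls has no least element.\<close>
lemma compact_kobayashi_cball:
  assumes p: "p \<in> \<Omega>"
  shows "compact (kobayashi_cball p r)"
proof (rule ccontr)
  define N where "N = {s. \<not> compact (kobayashi_cball p s)}"
  assume "\<not> compact (kobayashi_cball p r)"
  then have "N \<noteq> {}" by (auto simp: N_def)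
  have N_pos: "0 < s" if "s \<in> N" for s
    using that compact_kobayashi_cball_nonpos[OF p, of s] by (force simp: N_def)
  define \<rho> where "\<rho> = Inf N"
  have "bdd_below N" using N_pos by (intro bdd_belowI[of _ 0]) (simp add: less_imp_le)
  have \<rho>: "0 \<le> \<rho>"
    unfolding \<rho>_def using \<open>N \<noteq> {}\<close> N_pos by (intro cInf_greatest) (auto intro: less_imp_le)
  have below: "compact (kobayashi_cball p s)" if "s < \<rho>" for s
    using that cInf_lower[OF _ \<open>bdd_below N\<close>, of s] by (force simp: \<rho>_def N_def)
  have "compact (kobayashi_cball p \<rho>)"
  proof (cases "\<rho> = 0")
    case True
    then show ?thesis by (simp add: compact_kobayashi_cball_nonpos[OF p])
  next
    case False
    with \<rho> have "0 < \<rho>" by simp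
    show ?thesis
    proof (rule compact_if_mtotally_bounded)
      show "closedin (top_of_set \<Omega>) (kobayashi_cball p \<rho>)"
        by (rule closedin_kobayashi_cball[OF p])
      show "kobayashi.mtotally_bounded (kobayashi_cball p \<rho>)"
        by (rule mtotally_bounded_kobayashi_cball[OF p \<open>0 < \<rho>\<close> below])
    qed
  qed
  then obtain \<eta> where "0 < \<eta>" "compact (kobayashi_cball p (\<rho> + \<eta>))"
    using compact_kobayashi_cball_extend[OF p \<rho>] by blast
  moreover obtain s where "s \<in> N" "s < \<rho> + \<eta>"
    using cInf_lessD[OF \<open>N \<noteq> {}\<close>, of "\<rho> + \<eta>"] \<open>0 < \<eta>\<close> by (auto simp: \<rho>_def)
  moreover have "kobayashi_cball p s \<subseteq> kobayashi_cball p (\<rho> + \<eta>)"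
    using \<open>s < \<rho> + \<eta>\<close> by (auto simp: kobayashi_cball_def)
  ultimately show False
    using compact_kobayashi_cball_if_subset[OF p] by (auto simp: N_def kobayashi_cball_def)
qed

end

section \<open>Big horoballs\<close>

lemma Liminf_le_if_filterlim:
  fixes f :: "'a \<Rightarrow> 'b::complete_linorder"
  assumes "filterlim s F G" "G \<noteq> bot" "eventually (\<lambda>n. f (s n) \<le> c) G"
  shows "Liminf F f \<le> c"
proof (rule ccontr)
  assume "\<not> Liminf F f \<le> c"
  then have "eventually (\<lambda>x. c < f x) F"
    by (intro less_LiminfD) simp
  then have "eventually (\<lambda>n. c < f (s n)) G"
    using assms(1) by (rule eventually_compose_filterlim)
  with assms(3) have "eventually (\<lambda>n. False) G"
    by eventually_elim simp
  with assms(2) show False by simp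
qed

context complete_hyperbolic_domain
begin

lemma kobayashi_tendsto_at_top_at_frontier:
  assumes p: "p \<in> \<Omega>" and w: "\<And>n. w n \<in> \<Omega>" "w \<longlonglongrightarrow> x" and x: "x \<notin> \<Omega>"
  shows "filterlim (\<lambda>n. k p (w n)) at_top sequentially"
  unfolding filterlim_at_top
proof
  fix T
  have "closed (kobayashi_cball p T)"
    by (rule compact_imp_closed[OF compact_kobayashi_cball[OF p]])
  moreover have "x \<notin> kobayashi_cball p T" using x by (simp add: kobayashi_cball_def)
  ultimately have "eventually (\<lambda>n. w n \<in> - kobayashi_cball p T) sequentially"
    by (intro topological_tendstoD[OF w(2)]) auto
  then show "eventually (\<lambda>n. T \<le> k p (w n)) sequentially"
    by eventually_elim (use w(1) in \<open>auto simp: kobayashi_cball_def\<close>)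
qed

definition big_horofunction where
  "big_horofunction p x z = Liminf (at x within \<Omega>) (\<lambda>w. ereal (k z w - k p w))"

lemma horoball_b_eq: "horoball_b \<Omega> p x R = {z \<in> \<Omega>. big_horofunction p x z < ereal (ln R / 2)}"
  by (simp add: horoball_b_def big_horofunction_def)

lemma big_horofunction_ge:
  assumes "p \<in> \<Omega>" "z \<in> \<Omega>"
  shows "ereal (- k p z) \<le> big_horofunction p x z"
  unfolding big_horofunction_def
proof (rule Liminf_bounded)
  have "eventually (\<lambda>w. w \<in> \<Omega>) (at x within \<Omega>)" by (simp add: eventually_at_filter)
  then show "\<forall>\<^sub>F w in at x within \<Omega>. ereal (- k p z) \<le> ereal (k z w - k p w)"
  proof eventually_elim
    case (elim w)
    then show ?case using kobayashi_triangle[OF assms elim] by simp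
  qed
qed

lemma big_horofunction_le_if_sequence:
  assumes "\<And>n. w n \<in> \<Omega>" "w \<longlonglongrightarrow> x" "x \<notin> \<Omega>"
    and "eventually (\<lambda>n. k z (w n) - k p (w n) \<le> a) sequentially"
  shows "big_horofunction p x z \<le> ereal a"
proof -
  have "filterlim w (at x within \<Omega>) sequentially"
    using assms(1-3) by (auto simp: filterlim_at intro!: always_eventually)
  then show ?thesis
    unfolding big_horofunction_def using assms(4) by (intro Liminf_le_if_filterlim) auto
qed

lemma big_horofunction_unbounded_below:
  assumes p: "p \<in> \<Omega>" and x: "x \<in> frontier \<Omega>"
  shows "\<exists>z\<in>\<Omega>. big_horofunction p x z < ereal c"
proof -
  have "x \<in> closure \<Omega>" "x \<notin> \<Omega>" using x open_domain by (auto simp: frontier_def interior_open)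
  then obtain w where w: "\<And>n. w n \<in> \<Omega>" "w \<longlonglongrightarrow> x" by (auto simp: closure_sequential)
  define T where "T = \<bar>c\<bar> + 3"
  obtain N where N: "\<And>n. n \<ge> N \<Longrightarrow> T \<le> k p (w n)"
    using kobayashi_tendsto_at_top_at_frontier[OF p w \<open>x \<notin> \<Omega>\<close>]
    unfolding filterlim_at_top eventually_sequentially by blast
  define v where "v = (\<lambda>n. w (n + N))"
  have v: "\<And>n. v n \<in> \<Omega>" "v \<longlonglongrightarrow> x" "\<And>n. T \<le> k p (v n)"
    using w N LIMSEQ_ignore_initial_segment[OF w(2), of N] by (auto simp: v_def)
  have "\<exists>y. y \<in> kobayashi_cball p T \<and> k y (v n) < k p (v n) - T + 1" for n
  proof -
    have "0 \<le> T" by (simp add: T_def)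
    then obtain y where "y \<in> kobayashi_cball p T" "k y (v n) < k p (v n) - T + 1"
      by (rule kobayashi_cball_approach[OF p v(1) _ v(3), where e = 1]) simp
    then show ?thesis by blast
  qed
  then obtain Y where Y: "\<And>n. Y n \<in> kobayashi_cball p T" "\<And>n. k (Y n) (v n) < k p (v n) - T + 1"
    by metis
  obtain z r where z: "z \<in> kobayashi_cball p T" and r: "strict_mono r" and lim: "(Y \<circ> r) \<longlonglongrightarrow> z"
    using seq_compactE[OF compact_imp_seq_compact[OF compact_kobayashi_cball[OF p]]] Y(1) by metis
  have zO: "z \<in> \<Omega>" and YO: "\<And>n. Y n \<in> \<Omega>" using z Y(1) by (auto simp: kobayashi_cball_def)
  have "eventually (\<lambda>n. k z (Y (r n)) < 1) sequentially"
    using order_tendstoD(2)[OF tendsto_kobayashi_0[OF zO lim], of 1] by (simp add: comp_def)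
  then have "eventually (\<lambda>n. k z (v (r n)) - k p (v (r n)) \<le> c - 1) sequentially"
  proof eventually_elim
    case (elim n)
    show ?case
      using kobayashi_triangle[OF zO YO v(1), of "r n" "r n"] Y(2)[of "r n"] elim
        abs_ge_minus_self[of c]
      unfolding T_def by linarith
  qed
  then have "big_horofunction p x z \<le> ereal (c - 1)"
    using v(1) LIMSEQ_subseq_LIMSEQ[OF v(2) r] \<open>x \<notin> \<Omega>\<close>
    by (intro big_horofunction_le_if_sequence) (auto simp: comp_def)
  also have "\<dots> < ereal c" by simp
  finally show ?thesis using zO by blast
qed

lemma horoball_b_nonempty:
  assumes "p \<in> \<Omega>" "x \<in> frontier \<Omega>"
  shows "horoball_b \<Omega> p x R \<noteq> {}"
  using big_horofunction_unbounded_below[OF assms] by (auto simp: horoball_b_eq)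

lemma closure_horoball_b_meets_frontier:
  assumes bounded: "bounded \<Omega>" and p: "p \<in> \<Omega>" and x: "x \<in> frontier \<Omega>"
  shows "closure (horoball_b \<Omega> p x R) \<inter> frontier \<Omega> \<noteq> {}"
proof -
  define c where "c = ln R / 2"
  have "\<exists>z. z \<in> \<Omega> \<and> big_horofunction p x z < ereal (c - real m)" for m
    using big_horofunction_unbounded_below[OF p x] by blast
  then obtain Z where Z: "\<And>m. Z m \<in> \<Omega>" "\<And>m. big_horofunction p x (Z m) < ereal (c - real m)"
    by metis
  have ZH: "Z m \<in> horoball_b \<Omega> p x R" for m
    using Z[of m] by (auto simp: horoball_b_eq c_def intro: less_le_trans)
  have Zk: "real m - c < k p (Z m)" for m
    using le_less_trans[OF big_horofunction_ge[OF p Z(1)[of m]] Z(2)[of m]] by simp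
  obtain \<xi> r where \<xi>: "\<xi> \<in> closure \<Omega>" and r: "strict_mono r" and lim: "(Z \<circ> r) \<longlonglongrightarrow> \<xi>"
    using seq_compactE[OF compact_imp_seq_compact[OF compact_closure[THEN iffD2, OF bounded]]]
      Z(1) closure_subset by (metis subsetD)
  have "\<xi> \<in> closure (horoball_b \<Omega> p x R)"
    unfolding closure_sequential using ZH lim by (intro exI[of _ "Z \<circ> r"]) auto
  moreover have "\<xi> \<notin> \<Omega>"
  proof
    assume "\<xi> \<in> \<Omega>"
    then have "((\<lambda>n. k p (Z (r n))) \<longlongrightarrow> k p \<xi>) sequentially"
      using continuous_on_tendsto_compose[OF continuous_on_kobayashi_right[OF p] lim] Z(1)
      by (simp add: comp_def)
    moreover have "filterlim (\<lambda>n. k p (Z (r n))) at_top sequentially"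
    proof (rule filterlim_at_top_mono)
      show "filterlim (\<lambda>n. - c + real n) at_top sequentially"
        by (rule filterlim_tendsto_add_at_top[OF tendsto_const filterlim_real_sequentially])
      show "eventually (\<lambda>n. - c + real n \<le> k p (Z (r n))) sequentially"
        using Zk seq_suble[OF r] by (intro always_eventually allI) (smt (verit) of_nat_mono)
    qed
    ultimately show False
      using not_tendsto_and_filterlim_at_infinity[OF trivial_limit_sequentially]
        filterlim_at_top_imp_at_infinity by blast
  qed
  ultimately show ?thesis using \<xi> open_domain by (auto simp: frontier_def interior_open)
qed

end

theorem lemma3p2:
  fixes \<Omega> :: "(complex^'n) set"
  assumes "open \<Omega>" and "connected \<Omega>" and "\<Omega> \<noteq> {}"
    and "kobayashi_hyperbolic \<Omega>" and "kobayashi_complete \<Omega>"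
  shows "(\<forall>p\<in>\<Omega>. \<forall>x\<in>frontier \<Omega>. \<forall>R>0. horoball_b \<Omega> p x R \<noteq> {}) \<and>
         (bounded \<Omega> \<longrightarrow>
           (\<forall>p\<in>\<Omega>. \<forall>x\<in>frontier \<Omega>. \<forall>R>0. closure (horoball_b \<Omega> p x R) \<inter> frontier \<Omega> \<noteq> {}))"
proof -
  interpret complete_hyperbolic_domain \<Omega>
    by unfold_locales (use assms in auto)
  show ?thesis
    using horoball_b_nonempty closure_horoball_b_meets_frontier by blast
qed

end
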